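(* Consider an $SU(2)$ monopole $(\nabla,\Phi)$ on $E\to\mathbb R^3$ and fix $O\in\mathbb R^3$. For an oriented line $\gamma$ that is not a spectral line, let $x$ be the point of $\gamma$ closest to $O$, and let $L^\pm_\gamma\subset E_x$ be the (one-dimensional) subspaces of initial values at $x$ of solutions of $(\nabla_{\dot\gamma}-i\Phi)s=0$ along $\gamma$ decaying at the positive, respectively negative, end of $\gamma$, so $E_x=L^+_\gamma\oplus L^-_\gamma$. Define $M_\gamma:E_x\to E_x$ to be $+1$ on $L^+_\gamma$ and $-1$ on $L^-_\gamma$. Then there are constants $R,C>0$ such that $\|M_\gamma\|\le C$ for all non-spectral lines $\gamma$ with $\|x-O\|\ge R$.
   Context: An $SU(2)$ monopole of charge $k$ on $\mathbb R^3$: $SU(2)$ connection $\nabla$ and Higgs field $\Phi$ on rank-2 $SU(2)$ bundle $E$ with $F_\nabla=*\nabla\Phi$ and Hitchin's boundary conditions $\|\Phi\|=1-k/2r+O(r^{-2})$, $\|\nabla\Phi\|=O(r^{-2})$; in particular there is a unitary gauge diagonalising $\Phi$ in which the connection matrix is $\begin{pmatrix}A&B\\-B^*&-A\end{pmatrix}$ with $B=O(r^{-2})$ ($r$ = distance from $O$). A spectral line is an oriented line along which a nonzero solution of $(\nabla_{\dot\gamma}-i\Phi)s=0$ decays at both ends. Norms are the Hermitian norms on $E_x$. *)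

theory Defs
  imports "HOL-Analysis.Analysis"
begin

text \<open>Since every bundle over R^3 is trivial, the rank-2 SU(2) bundle E is
  R^3 x C^2 with the standard Hermitian structure. A connection is
  nabla_j = d_j + A_j with A_j(x) skew-Hermitian traceless 2x2 matrices (j = 1,2,3),
  and the Higgs field Phi(x) is skew-Hermitian traceless.\<close>

type_synonym pt = "real^3"
type_synonym fib = "complex^2"
type_synonym mat = "complex^2^2"

definition madj :: "mat \<Rightarrow> mat" where
  "madj M = (\<chi> a b. cnj (M $ b $ a))"

definition su2 :: "mat \<Rightarrow> bool" where
  "su2 M \<longleftrightarrow> madj M = - M \<and> M $ 1 $ 1 + M $ 2 $ 2 = 0"

definition cvscale :: "complex \<Rightarrow> fib \<Rightarrow> fib" where
  "cvscale c v = (\<chi> a. c * v $ a)"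

definition mcomm :: "mat \<Rightarrow> mat \<Rightarrow> mat" where
  "mcomm M N = M ** N - N ** M"

definition mnorm :: "mat \<Rightarrow> real" where
  "mnorm M = onorm (\<lambda>v::fib. M *v v)"

definition pd :: "3 \<Rightarrow> (pt \<Rightarrow> 'b::real_normed_vector) \<Rightarrow> pt \<Rightarrow> 'b" where
  "pd j f x = frechet_derivative f (at x) (axis j 1)"

fun iter_pd :: "3 list \<Rightarrow> (pt \<Rightarrow> 'b::real_normed_vector) \<Rightarrow> pt \<Rightarrow> 'b" where
  "iter_pd [] f = f"
| "iter_pd (j # js) f = pd j (iter_pd js f)"

definition smooth :: "(pt \<Rightarrow> 'b::real_normed_vector) \<Rightarrow> bool" where
  "smooth f \<longleftrightarrow> (\<forall>js x. iter_pd js f differentiable (at x))"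

definition covPhi :: "(pt \<Rightarrow> 3 \<Rightarrow> mat) \<Rightarrow> (pt \<Rightarrow> mat) \<Rightarrow> 3 \<Rightarrow> pt \<Rightarrow> mat" where
  "covPhi A Phi j x = pd j Phi x + mcomm (A x j) (Phi x)"

definition curv :: "(pt \<Rightarrow> 3 \<Rightarrow> mat) \<Rightarrow> 3 \<Rightarrow> 3 \<Rightarrow> pt \<Rightarrow> mat" where
  "curv A j k x = pd j (\<lambda>y. A y k) x - pd k (\<lambda>y. A y j) x + mcomm (A x j) (A x k)"

text \<open>SU(2) monopole of charge k on R^3 with Hitchin's boundary conditions:
  Bogomolny equation F = * nabla Phi, ||Phi|| = 1 - k/2r + O(r^-2), ||nabla Phi|| = O(r^-2).\<close>
definition monopole :: "nat \<Rightarrow> (pt \<Rightarrow> 3 \<Rightarrow> mat) \<Rightarrow> (pt \<Rightarrow> mat) \<Rightarrow> bool" where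
  "monopole k A Phi \<longleftrightarrow>
     (\<forall>j. smooth (\<lambda>x. A x j)) \<and> smooth Phi \<and>
     (\<forall>x j. su2 (A x j)) \<and> (\<forall>x. su2 (Phi x)) \<and>
     (\<forall>x. curv A 1 2 x = covPhi A Phi 3 x \<and>
          curv A 2 3 x = covPhi A Phi 1 x \<and>
          curv A 3 1 x = covPhi A Phi 2 x) \<and>
     (\<exists>C R. R > 0 \<and> (\<forall>x. norm x \<ge> R \<longrightarrow>
          \<bar>mnorm (Phi x) - (1 - real k / (2 * norm x))\<bar> \<le> C / (norm x)\<^sup>2)) \<and>
     (\<exists>C R. R > 0 \<and> (\<forall>x. norm x \<ge> R \<longrightarrow>
          (\<Sum>j\<in>UNIV. mnorm (covPhi A Phi j x)) \<le> C / (norm x)\<^sup>2))"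

text \<open>Oriented line through x with unit direction u, parametrised as t |-> x + t u.
  A section s along it solves (nabla_{gamma'} - i Phi) s = 0, i.e.
  s'(t) + A_u(gamma t) s(t) - i Phi(gamma t) s(t) = 0, where A_u = sum_j u_j A_j.\<close>
definition line_sol :: "(pt \<Rightarrow> 3 \<Rightarrow> mat) \<Rightarrow> (pt \<Rightarrow> mat) \<Rightarrow> pt \<Rightarrow> pt \<Rightarrow> (real \<Rightarrow> fib) \<Rightarrow> bool" where
  "line_sol A Phi x u s \<longleftrightarrow>
     (\<forall>t. (s has_vector_derivative
           (cvscale \<i> (Phi (x + t *\<^sub>R u) *v s t)
            - (\<Sum>j\<in>UNIV. cvscale (complex_of_real (u $ j)) (A (x + t *\<^sub>R u) j *v s t))))
         (at t))"

definition spectral_line :: "(pt \<Rightarrow> 3 \<Rightarrow> mat) \<Rightarrow> (pt \<Rightarrow> mat) \<Rightarrow> pt \<Rightarrow> pt \<Rightarrow> bool" where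
  "spectral_line A Phi x u \<longleftrightarrow>
     (\<exists>s. line_sol A Phi x u s \<and> (\<exists>t. s t \<noteq> 0) \<and>
          (s \<longlongrightarrow> 0) at_top \<and> (s \<longlongrightarrow> 0) at_bot)"

definition Lplus :: "(pt \<Rightarrow> 3 \<Rightarrow> mat) \<Rightarrow> (pt \<Rightarrow> mat) \<Rightarrow> pt \<Rightarrow> pt \<Rightarrow> fib set" where
  "Lplus A Phi x u = {s 0 | s. line_sol A Phi x u s \<and> (s \<longlongrightarrow> 0) at_top}"

definition Lminus :: "(pt \<Rightarrow> 3 \<Rightarrow> mat) \<Rightarrow> (pt \<Rightarrow> mat) \<Rightarrow> pt \<Rightarrow> pt \<Rightarrow> fib set" where
  "Lminus A Phi x u = {s 0 | s. line_sol A Phi x u s \<and> (s \<longlongrightarrow> 0) at_bot}"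

definition Mgamma :: "(pt \<Rightarrow> 3 \<Rightarrow> mat) \<Rightarrow> (pt \<Rightarrow> mat) \<Rightarrow> pt \<Rightarrow> pt \<Rightarrow> fib \<Rightarrow> fib" where
  "Mgamma A Phi x u v =
     (THE w. \<exists>a\<in>Lplus A Phi x u. \<exists>b\<in>Lminus A Phi x u. v = a + b \<and> w = a - b)"

definition closest_pt :: "pt \<Rightarrow> pt \<Rightarrow> pt \<Rightarrow> pt" where
  "closest_pt o0 p u = p + ((o0 - p) \<bullet> u) *\<^sub>R u"

end

theory Submission
  imports Defs
begin

text \<open>Along an oriented line far from \<open>O\<close>, the Higgs field has norm close to \<open>1\<close> and its
  covariant derivative is small. For a solution \<open>s\<close> of \<open>(\<nabla>\<^sub>\<gamma>' - i\<Phi>) s = 0\<close> put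
  \<open>n = \<bar>s\<bar>\<^sup>2\<close> and \<open>h = Re \<langle>s, i\<Phi> s\<rangle>\<close>. Then \<open>n' = 2 h\<close> and \<open>h' \<ge> n\<close>, so \<open>h + n/2\<close> grows at least
  like \<open>e\<^sup>t\<close>. Hence a solution decaying at the positive end has \<open>h \<le> -n/2\<close> everywhere, and one
  decaying at the negative end has \<open>h \<ge> n/2\<close>: the lines \<open>L\<^sup>+\<close> and \<open>L\<^sup>-\<close> lie in disjoint cones.
  Both are nonzero, by a compactness argument applied to the fundamental solution. Writing
  \<open>v = a + b\<close> with \<open>a \<in> L\<^sup>+\<close>, \<open>b \<in> L\<^sup>-\<close>, the cones give
  \<open>\<bar>a - b\<bar>\<^sup>2 \<le> 2 (\<bar>a\<bar>\<^sup>2 + \<bar>b\<bar>\<^sup>2) \<le> 4 (h(b) - h(a)) \<le> 4 \<bar>\<Phi>\<bar> \<bar>a + b\<bar> \<bar>a - b\<bar>\<close>, so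
  \<open>\<bar>M\<^sub>\<gamma> v\<bar> = \<bar>a - b\<bar> \<le> 5 \<bar>v\<bar>\<close>.\<close>

section \<open>Linear differential equations in a Banach space\<close>

definition oriented_integral :: "(real \<Rightarrow> 'a::banach) \<Rightarrow> real \<Rightarrow> 'a" where
  "oriented_integral f t = (if 0 \<le> t then integral {0..t} f else - integral {t..0} f)"

lemma oriented_integral_0 [simp]: "oriented_integral f 0 = 0"
  by (simp add: oriented_integral_def)

lemma oriented_integral_has_vector_derivative:
  assumes f: "continuous_on UNIV f"
  shows "(oriented_integral f has_vector_derivative f t) (at t)"
proof -
  define a where "a = - \<bar>t\<bar> - 1"
  have integrable: "f integrable_on {c..d}" for c d
    by (rule integrable_continuous_real) (rule continuous_on_subset[OF f], simp)
  have eq: "oriented_integral f s = integral {a..s} f - integral {a..0} f" if "a < s" for s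
    using Henstock_Kurzweil_Integration.integral_combine[of a 0 s f]
      Henstock_Kurzweil_Integration.integral_combine[of a s 0 f] that integrable
    by (cases "0 \<le> s") (auto simp: oriented_integral_def a_def algebra_simps)
  have "((\<lambda>s. integral {a..s} f) has_vector_derivative f t) (at t within {a..\<bar>t\<bar> + 1})"
    by (rule integral_has_vector_derivative) (auto simp: a_def intro: continuous_on_subset[OF f])
  then have "((\<lambda>s. integral {a..s} f) has_vector_derivative f t) (at t)"
    using at_within_Icc_at[of a t "\<bar>t\<bar> + 1"] by (simp add: a_def)
  then have "((\<lambda>s. integral {a..s} f - integral {a..0} f) has_vector_derivative f t) (at t)"
    by (rule derivative_eq_intros) auto
  then show ?thesis
    by (rule has_vector_derivative_transform_within_open[where S="{a<..}"]) (auto simp: a_def eq)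
qed

lemma has_vector_derivative_mirror:
  assumes "(f has_vector_derivative f') (at (- t))"
  shows "((\<lambda>t. f (- t)) has_vector_derivative - f') (at t)"
proof -
  have "(uminus has_vector_derivative (-1)) (at t)"
    by (auto intro!: derivative_eq_intros simp: has_real_derivative_iff_has_vector_derivative[symmetric])
  from vector_diff_chain_at[OF this assms] show ?thesis by (simp add: o_def)
qed

lemma norm_le_power_div_fact_of_derivative_nonneg:
  fixes F :: "real \<Rightarrow> 'a::real_normed_vector"
  assumes t: "0 \<le> t" and F0: "F 0 = 0" and cont: "continuous_on {0..t} F"
    and deriv: "\<And>\<tau>. 0 < \<tau> \<Longrightarrow> \<tau> < t \<Longrightarrow> (F has_vector_derivative F' \<tau>) (at \<tau>)"
    and bound: "\<And>\<tau>. 0 < \<tau> \<Longrightarrow> \<tau> < t \<Longrightarrow> norm (F' \<tau>) \<le> K * (K * \<tau>) ^ n / fact n"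
  shows "norm (F t) \<le> (K * t) ^ Suc n / fact (Suc n)"
proof (cases "t = 0")
  case False
  define \<phi> where "\<phi> \<tau> = (K * \<tau>) ^ Suc n / fact (Suc n)" for \<tau>
  have phi_deriv: "(\<phi> has_vector_derivative K * (K * \<tau>) ^ n / fact n) (at \<tau>)" for \<tau>
  proof -
    have lin: "((\<lambda>\<tau>. K * \<tau>) has_real_derivative K) (at \<tau>)"
      by (auto intro!: derivative_eq_intros)
    have "((\<lambda>\<tau>. (K * \<tau>) ^ Suc n) has_real_derivative real (Suc n) * (K * \<tau>) ^ n * K) (at \<tau>)"
      using DERIV_power[OF lin, of "Suc n"] by (simp add: mult_ac)
    then have "(\<phi> has_real_derivative real (Suc n) * (K * \<tau>) ^ n * K / fact (Suc n)) (at \<tau>)"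
      unfolding \<phi>_def by (rule DERIV_cdivide)
    moreover have "real (Suc n) * (K * \<tau>) ^ n * K / fact (Suc n) = K * (K * \<tau>) ^ n / fact n"
      by (simp del: of_nat_Suc)
    ultimately show ?thesis by (metis has_real_derivative_iff_has_vector_derivative)
  qed
  have "norm (F t - F 0) \<le> \<phi> t - \<phi> 0"
  proof (rule differentiable_bound_general[OF _ cont _ deriv phi_deriv bound])
    show "0 < t" using t False by simp
    show "continuous_on {0..t} \<phi>" unfolding \<phi>_def by (intro continuous_intros) auto
  qed
  then show ?thesis by (simp add: F0 \<phi>_def)
qed (simp add: F0)

lemma norm_le_power_div_fact_of_derivative:
  fixes F :: "real \<Rightarrow> 'a::real_normed_vector"
  assumes F0: "F 0 = 0" and deriv: "\<And>\<tau>. (F has_vector_derivative F' \<tau>) (at \<tau>)"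
    and bound: "\<And>\<tau>. \<bar>\<tau>\<bar> \<le> \<bar>t\<bar> \<Longrightarrow> norm (F' \<tau>) \<le> K * (K * \<bar>\<tau>\<bar>) ^ n / fact n"
  shows "norm (F t) \<le> (K * \<bar>t\<bar>) ^ Suc n / fact (Suc n)"
proof (cases "0 \<le> t")
  case True
  have "continuous_on {0..t} F"
    using deriv by (meson continuous_at_imp_continuous_on has_vector_derivative_continuous)
  then have "norm (F t) \<le> (K * t) ^ Suc n / fact (Suc n)"
  proof (rule norm_le_power_div_fact_of_derivative_nonneg[OF True F0 _ deriv])
    show "norm (F' \<tau>) \<le> K * (K * \<tau>) ^ n / fact n" if "0 < \<tau>" "\<tau> < t" for \<tau>
      using bound[of \<tau>] that by simp
  qed
  then show ?thesis using True by simp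
next
  case False
  let ?G = "\<lambda>\<tau>. F (- \<tau>)"
  have G_deriv: "(?G has_vector_derivative - F' (- \<tau>)) (at \<tau>)" for \<tau>
    by (rule has_vector_derivative_mirror[OF deriv])
  then have G_cont: "continuous_on {0..- t} ?G"
    by (meson continuous_at_imp_continuous_on has_vector_derivative_continuous)
  have "norm (?G (- t)) \<le> (K * - t) ^ Suc n / fact (Suc n)"
  proof (rule norm_le_power_div_fact_of_derivative_nonneg[OF _ _ G_cont G_deriv])
    show "norm (- F' (- \<tau>)) \<le> K * (K * \<tau>) ^ n / fact n" if "0 < \<tau>" "\<tau> < - t" for \<tau>
      using bound[of "- \<tau>"] that by simp
  qed (use False F0 in auto)
  then show ?thesis using False by simp
qed

fun picard_term :: "(real \<Rightarrow> 'a \<Rightarrow>\<^sub>L 'a) \<Rightarrow> nat \<Rightarrow> real \<Rightarrow> 'a::banach \<Rightarrow>\<^sub>L 'a" where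
  "picard_term M 0 t = id_blinfun"
| "picard_term M (Suc n) t = oriented_integral (\<lambda>\<tau>. M \<tau> o\<^sub>L picard_term M n \<tau>) t"

lemma continuous_on_blinfun_compose:
  "continuous_on S f \<Longrightarrow> continuous_on S g \<Longrightarrow> continuous_on S (\<lambda>x. f x o\<^sub>L g x)"
  by (rule bounded_bilinear.continuous_on[OF bounded_bilinear_blinfun_compose])

lemma continuous_on_picard_term:
  assumes "continuous_on UNIV M"
  shows "continuous_on UNIV (picard_term M n)"
proof (induction n)
  case (Suc n)
  have "(picard_term M (Suc n) has_vector_derivative M t o\<^sub>L picard_term M n t) (at t)" for t
    unfolding picard_term.simps
    by (intro oriented_integral_has_vector_derivative continuous_on_blinfun_compose assms Suc)
  then show ?case
    by (meson continuous_at_imp_continuous_on has_vector_derivative_continuous)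
qed simp

lemma picard_term_has_vector_derivative:
  assumes "continuous_on UNIV M"
  shows "(picard_term M (Suc n) has_vector_derivative M t o\<^sub>L picard_term M n t) (at t)"
  unfolding picard_term.simps
  by (intro oriented_integral_has_vector_derivative continuous_on_blinfun_compose assms
      continuous_on_picard_term)

lemma norm_picard_term_le:
  assumes M: "continuous_on UNIV M" and K: "\<And>\<tau>. \<bar>\<tau>\<bar> \<le> T \<Longrightarrow> norm (M \<tau>) \<le> K"
  shows "\<bar>t\<bar> \<le> T \<Longrightarrow> norm (picard_term M n t) \<le> (K * \<bar>t\<bar>) ^ n / fact n"
proof (induction n arbitrary: t)
  case 0
  then show ?case by (simp add: norm_blinfun_id_le)
next
  case (Suc n)
  have K0: "0 \<le> K" using K[OF Suc.prems] norm_ge_zero order_trans by blast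
  show ?case
  proof (rule norm_le_power_div_fact_of_derivative[OF _ picard_term_has_vector_derivative[OF M]])
    fix \<tau> assume "\<bar>\<tau>\<bar> \<le> \<bar>t\<bar>"
    then have "\<bar>\<tau>\<bar> \<le> T" using Suc.prems by simp
    then have "norm (M \<tau>) * norm (picard_term M n \<tau>) \<le> K * ((K * \<bar>\<tau>\<bar>) ^ n / fact n)"
      using K Suc.IH K0 by (intro mult_mono) auto
    then show "norm (M \<tau> o\<^sub>L picard_term M n \<tau>) \<le> K * (K * \<bar>\<tau>\<bar>) ^ n / fact n"
      using norm_blinfun_compose order_trans by fastforce
  qed simp
qed

lemma picard_term_bounds:
  assumes M: "continuous_on UNIV M"
  obtains K where "\<And>\<tau>. \<bar>\<tau>\<bar> \<le> T \<Longrightarrow> norm (M \<tau>) \<le> K"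
    and "\<And>n \<tau>. \<bar>\<tau>\<bar> \<le> T \<Longrightarrow> norm (picard_term M n \<tau>) \<le> (K * T) ^ n / fact n"
proof -
  obtain K where "\<forall>\<tau>\<in>{-T..T}. norm (M \<tau>) \<le> K"
    using compact_imp_bounded[OF compact_continuous_image[OF continuous_on_subset[OF M]
        compact_Icc[of "-T" T]]]
    by (auto simp: bounded_iff)
  then have K: "norm (M \<tau>) \<le> K" if "\<bar>\<tau>\<bar> \<le> T" for \<tau>
    using that by (auto simp: abs_le_iff)
  moreover have "norm (picard_term M n \<tau>) \<le> (K * T) ^ n / fact n" if \<tau>: "\<bar>\<tau>\<bar> \<le> T" for n \<tau>
  proof -
    have "0 \<le> K" using K[OF \<tau>] norm_ge_zero order_trans by blast
    then have "(K * \<bar>\<tau>\<bar>) ^ n / fact n \<le> (K * T) ^ n / fact n"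
      using \<tau> by (intro divide_right_mono power_mono mult_left_mono) auto
    then show ?thesis using norm_picard_term_le[OF M K \<tau>, of n] by linarith
  qed
  ultimately show thesis using that by blast
qed

lemma has_vector_derivative_series:
  fixes f :: "nat \<Rightarrow> real \<Rightarrow> 'a::banach"
  assumes S: "open S" "convex S" and x0: "x0 \<in> S" "summable (\<lambda>n. f n x0)"
    and deriv: "\<And>n x. x \<in> S \<Longrightarrow> (f n has_vector_derivative f' n x) (at x)"
    and unif: "uniform_limit S (\<lambda>n x. \<Sum>i<n. f' i x) g' sequentially"
    and x: "x \<in> S"
  shows "((\<lambda>x. \<Sum>n. f n x) has_vector_derivative g' x) (at x)"
proof -
  have "\<exists>g. \<forall>x\<in>S. (\<lambda>n. f n x) sums g x \<and> (g has_derivative (\<lambda>h. h *\<^sub>R g' x)) (at x within S)"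
  proof (rule has_derivative_series[where g'="\<lambda>x h. h *\<^sub>R g' x"])
    show "convex S" "x0 \<in> S" "(\<lambda>n. f n x0) sums (\<Sum>n. f n x0)"
      using S x0 by auto
    show "(f n has_derivative (\<lambda>h. h *\<^sub>R f' n x)) (at x within S)" if "x \<in> S" for n x
      using deriv[OF that] by (simp add: has_vector_derivative_def has_derivative_at_withinI)
    show "\<forall>\<^sub>F n in sequentially. \<forall>x\<in>S. \<forall>h.
        norm ((\<Sum>i<n. h *\<^sub>R f' i x) - h *\<^sub>R g' x) \<le> e * norm h" if "e > 0" for e
      using uniform_limitD[OF unif that]
    proof eventually_elim
      case (elim n)
      show ?case
      proof (intro ballI allI)
        fix x h assume "x \<in> S"
        then have "\<bar>h\<bar> * norm ((\<Sum>i<n. f' i x) - g' x) \<le> \<bar>h\<bar> * e"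
          using elim by (intro mult_left_mono) (auto simp: dist_norm intro: less_imp_le)
        then show "norm ((\<Sum>i<n. h *\<^sub>R f' i x) - h *\<^sub>R g' x) \<le> e * norm h"
          by (simp add: scaleR_sum_right[symmetric] scaleR_diff_right[symmetric] mult.commute)
      qed
    qed
  qed
  then obtain g where g: "\<And>x. x \<in> S \<Longrightarrow> (\<lambda>n. f n x) sums g x"
    "\<And>x. x \<in> S \<Longrightarrow> (g has_derivative (\<lambda>h. h *\<^sub>R g' x)) (at x within S)"
    by blast
  have "(g has_vector_derivative g' x) (at x)"
    using g(2)[OF x] at_within_open[OF x S(1)] by (simp add: has_vector_derivative_def)
  then show ?thesis
    by (rule has_vector_derivative_transform_within_open[OF _ S(1) x])
       (use g(1) in \<open>simp add: sums_iff\<close>)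
qed

definition fundamental_solution :: "(real \<Rightarrow> 'a \<Rightarrow>\<^sub>L 'a) \<Rightarrow> real \<Rightarrow> 'a::banach \<Rightarrow>\<^sub>L 'a" where
  "fundamental_solution M t = (\<Sum>n. picard_term M n t)"

lemma fundamental_solution_0: "fundamental_solution M 0 = id_blinfun"
proof -
  have "picard_term M n 0 = (if n = 0 then id_blinfun else 0)" for n
    by (cases n) simp_all
  then have "(\<lambda>n. picard_term M n 0) sums id_blinfun"
    using sums_single[of 0 "\<lambda>_. id_blinfun"] by simp
  then show ?thesis
    by (simp add: fundamental_solution_def sums_iff)
qed

lemma picard_series_converges_uniformly:
  assumes M: "continuous_on UNIV M"
  obtains K where "\<And>\<tau>. \<bar>\<tau>\<bar> \<le> T \<Longrightarrow> norm (M \<tau>) \<le> K"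
    and "\<And>\<tau>. \<bar>\<tau>\<bar> \<le> T \<Longrightarrow> summable (\<lambda>n. picard_term M n \<tau>)"
    and "uniform_limit {-T..T} (\<lambda>n x. \<Sum>i<n. picard_term M i x) (fundamental_solution M) sequentially"
    and "bounded (fundamental_solution M ` {-T..T})"
proof -
  obtain K where K: "\<And>\<tau>. \<bar>\<tau>\<bar> \<le> T \<Longrightarrow> norm (M \<tau>) \<le> K"
    and bounds: "\<And>n \<tau>. \<bar>\<tau>\<bar> \<le> T \<Longrightarrow> norm (picard_term M n \<tau>) \<le> (K * T) ^ n / fact n"
    using picard_term_bounds[OF M, where T=T] by blast
  have summable: "summable (\<lambda>n. (K * T) ^ n / fact n)"
    using summable_exp[of "K * T"] by (simp add: field_simps)
  have term_bound: "norm (picard_term M n \<tau>) \<le> (K * T) ^ n / fact n" if "\<tau> \<in> {-T..T}" for n \<tau>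
    using bounds that by (simp add: abs_le_iff)
  have "norm (fundamental_solution M \<tau>) \<le> (\<Sum>n. (K * T) ^ n / fact n)" if "\<tau> \<in> {-T..T}" for \<tau>
    unfolding fundamental_solution_def by (rule norm_suminf_le[OF term_bound[OF that] summable])
  then have "bounded (fundamental_solution M ` {-T..T})"
    unfolding bounded_iff by blast
  moreover have "uniform_limit {-T..T} (\<lambda>n x. \<Sum>i<n. picard_term M i x) (fundamental_solution M)
      sequentially"
    unfolding fundamental_solution_def[abs_def] by (rule Weierstrass_m_test[OF term_bound summable])
  moreover have "summable (\<lambda>n. picard_term M n \<tau>)" if "\<bar>\<tau>\<bar> \<le> T" for \<tau>
    by (rule summable_comparison_test'[OF summable bounds[OF that]])
  ultimately show thesis using that K by blast
qed

lemma fundamental_solution_has_vector_derivative: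
  assumes M: "continuous_on UNIV M"
  shows "(fundamental_solution M has_vector_derivative M t o\<^sub>L fundamental_solution M t) (at t)"
proof -
  let ?U = "fundamental_solution M"
  define T where "T = \<bar>t\<bar> + 1"
  define S where "S = {-T<..<T}"
  have S: "open S" "convex S" "t \<in> S" "S \<subseteq> {-T..T}" by (auto simp: S_def T_def)
  have in_S: "\<bar>\<tau>\<bar> \<le> T" if "\<tau> \<in> S" for \<tau>
    using that by (auto simp: S_def)
  obtain K where K: "\<And>\<tau>. \<bar>\<tau>\<bar> \<le> T \<Longrightarrow> norm (M \<tau>) \<le> K"
    and summable: "\<And>\<tau>. \<bar>\<tau>\<bar> \<le> T \<Longrightarrow> summable (\<lambda>n. picard_term M n \<tau>)"
    and unif: "uniform_limit {-T..T} (\<lambda>n x. \<Sum>i<n. picard_term M i x) ?U sequentially"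
    and bounded: "bounded (?U ` {-T..T})"
    using picard_series_converges_uniformly[OF M, where T=T] by blast
  have "bounded (M ` S)"
    using K[OF in_S] unfolding bounded_iff by blast
  then have "uniform_limit S (\<lambda>n x. M x o\<^sub>L (\<Sum>i<n. picard_term M i x)) (\<lambda>x. M x o\<^sub>L ?U x) sequentially"
    using uniform_limit_on_subset[OF unif S(4)] bounded_subset[OF bounded image_mono[OF S(4)]]
    by (intro bounded_bilinear.bounded_uniform_limit[OF bounded_bilinear_blinfun_compose]
        uniform_limit_const)
  then have derivs_unif: "uniform_limit S (\<lambda>n x. \<Sum>i<n. M x o\<^sub>L picard_term M i x) (\<lambda>x. M x o\<^sub>L ?U x)
      sequentially"
    by (simp add: bounded_bilinear.sum_right[OF bounded_bilinear_blinfun_compose])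
  have "((\<lambda>x. \<Sum>n. picard_term M (Suc n) x) has_vector_derivative M t o\<^sub>L ?U t) (at t)"
  proof (rule has_vector_derivative_series[OF S(1,2,3) _ _ derivs_unif S(3)])
    show "summable (\<lambda>n. picard_term M (Suc n) t)"
      using summable[OF in_S[OF S(3)]] summable_Suc_iff[of "\<lambda>n. picard_term M n t"] by blast
    show "(picard_term M (Suc n) has_vector_derivative M x o\<^sub>L picard_term M n x) (at x)" for n x
      by (rule picard_term_has_vector_derivative[OF M])
  qed
  then have "((\<lambda>x. (\<Sum>n. picard_term M (Suc n) x) + id_blinfun) has_vector_derivative M t o\<^sub>L ?U t)
      (at t)"
    by (rule derivative_eq_intros) auto
  moreover have "(\<Sum>n. picard_term M (Suc n) x) + id_blinfun = ?U x" if "x \<in> S" for x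
    using suminf_split_head[OF summable[OF in_S[OF that]]] by (simp add: fundamental_solution_def)
  ultimately show ?thesis
    by (rule has_vector_derivative_transform_within_open[OF _ S(1,3)])
qed

section \<open>The form \<open>Re \<langle>v, i P v\<rangle>\<close> for \<open>P \<in> su(2)\<close>\<close>

lemma linear_matrix_vector_mult_left: "linear (\<lambda>Q::'a::real_algebra_1^'n^'m. Q *v v)"
  by (rule linearI) (simp_all add: matrix_vector_mult_def vec_eq_iff distrib_right sum.distrib
      scaleR_sum_right)

lemma bounded_bilinear_matrix_vector_mult: "bounded_bilinear (\<lambda>(Q::mat) (v::fib). Q *v v)"
  unfolding bilinear_conv_bounded_bilinear[symmetric] bilinear_def
  by (simp add: linear_matrix_vector_mult_left bounded_linear.linear[OF matrix_vector_mul_bounded_linear])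

lemma bounded_linear_cvscale: "bounded_linear (cvscale c)"
  unfolding linear_conv_bounded_linear[symmetric]
  by (rule linearI) (simp_all add: cvscale_def vec_eq_iff algebra_simps scaleR_conv_of_real)

lemma cvscale_of_real: "cvscale (complex_of_real r) v = r *\<^sub>R v"
  by (simp add: cvscale_def vec_eq_iff) (simp add: scaleR_conv_of_real)

lemma cvscale_0 [simp]: "cvscale c 0 = 0"
  by (simp add: cvscale_def vec_eq_iff)

lemma cvscale_uminus: "cvscale c (- v) = - cvscale c v"
  by (simp add: cvscale_def vec_eq_iff)

lemma norm_cvscale: "norm (cvscale c v) = cmod c * norm v"
  by (simp add: cvscale_def norm_vec_def L2_set_def norm_mult power_mult_distrib
      sum_distrib_left[symmetric] real_sqrt_mult)

lemma linear_madj: "linear madj"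
  by (rule linearI) (simp_all add: madj_def vec_eq_iff)

lemma linear_mcomm_left: "linear (\<lambda>B. mcomm B P)"
  by (rule linearI)
     (simp_all add: mcomm_def matrix_matrix_mult_def vec_eq_iff sum.distrib algebra_simps
       scaleR_sum_right)

lemma mcomm_uminus: "mcomm (- B) (- P) = mcomm B P"
  by (simp add: mcomm_def matrix_matrix_mult_def vec_eq_iff)

lemma norm_matrix_vector_mult_le: "norm ((Q::mat) *v v) \<le> mnorm Q * norm v"
  unfolding mnorm_def by (rule onorm[OF matrix_vector_mul_bounded_linear])

lemma mnorm_nonneg: "0 \<le> mnorm Q"
  unfolding mnorm_def by (rule onorm_pos_le[OF matrix_vector_mul_bounded_linear])

lemma mnorm_uminus: "mnorm (- Q) = mnorm Q"
  unfolding mnorm_def bounded_bilinear.minus_left[OF bounded_bilinear_matrix_vector_mult]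
  by (rule onorm_neg)

lemma mnorm_scaleR: "mnorm (c *\<^sub>R M) = \<bar>c\<bar> * mnorm M"
  unfolding mnorm_def bounded_bilinear.scaleR_left[OF bounded_bilinear_matrix_vector_mult]
  by (rule onorm_scaleR[OF matrix_vector_mul_bounded_linear])

lemma mnorm_triangle: "mnorm (M + N) \<le> mnorm M + mnorm N"
  unfolding mnorm_def matrix_vector_mult_add_rdistrib
  by (rule onorm_triangle[OF matrix_vector_mul_bounded_linear matrix_vector_mul_bounded_linear])

lemma mnorm_sum_le: "mnorm (\<Sum>j\<in>S. M j) \<le> (\<Sum>j\<in>S. mnorm (M j))"
proof (induction S rule: infinite_finite_induct)
  case (insert j S)
  then show ?case using mnorm_triangle[of "M j" "\<Sum>j\<in>S. M j"] by simp
qed (simp_all add: mnorm_def onorm_zero)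

lemma skew_hermitian_entries:
  assumes "madj B = - B"
  shows "B $ 2 $ 1 = - cnj (B $ 1 $ 2)" "Re (B $ 1 $ 1) = 0" "Re (B $ 2 $ 2) = 0"
proof -
  have e: "cnj (B $ b $ a) = - B $ a $ b" for a b
    using assms unfolding madj_def vec_eq_iff by auto
  show "B $ 2 $ 1 = - cnj (B $ 1 $ 2)" by (simp add: e[of 1 2])
  show "Re (B $ 1 $ 1) = 0" using arg_cong[OF e[of 1 1], of Re] by simp
  show "Re (B $ 2 $ 2) = 0" using arg_cong[OF e[of 2 2], of Re] by simp
qed

lemma su2_entries:
  assumes "su2 P"
  shows "P $ 2 $ 1 = - cnj (P $ 1 $ 2)" "Re (P $ 1 $ 1) = 0" "P $ 2 $ 2 = - P $ 1 $ 1"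
  using assms skew_hermitian_entries[of P] unfolding su2_def by (auto simp: add_eq_0_iff)

lemma mnorm_su2:
  assumes "su2 P"
  shows "(mnorm P)\<^sup>2 = (Im (P $ 1 $ 1))\<^sup>2 + (cmod (P $ 1 $ 2))\<^sup>2"
    and "norm (P *v v) = mnorm P * norm v"
proof -
  define r where "r = sqrt ((Im (P $ 1 $ 1))\<^sup>2 + (cmod (P $ 1 $ 2))\<^sup>2)"
  have "inner (P *v v) (P *v v) = r\<^sup>2 * inner v v" for v
    unfolding r_def real_sqrt_pow2[OF add_nonneg_nonneg[OF zero_le_power2 zero_le_power2]]
      cmod_power2
    using su2_entries[OF assms]
    by (simp add: inner_vec_def sum_2 matrix_vector_mult_def inner_complex_def algebra_simps
        power2_eq_square)
  then have nv: "norm (P *v v) = r * norm v" for v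
    by (simp add: norm_eq_sqrt_inner real_sqrt_mult r_def)
  have "mnorm P = r"
  proof (rule antisym)
    show "mnorm P \<le> r" unfolding mnorm_def by (rule onorm_le) (simp add: nv)
    have "norm (P *v axis 1 1) / norm (axis 1 1 :: fib) \<le> mnorm P"
      unfolding mnorm_def by (rule le_onorm[OF matrix_vector_mul_bounded_linear])
    then show "r \<le> mnorm P" by (simp add: nv)
  qed
  then show "(mnorm P)\<^sup>2 = (Im (P $ 1 $ 1))\<^sup>2 + (cmod (P $ 1 $ 2))\<^sup>2"
    and "norm (P *v v) = mnorm P * norm v"
    by (simp_all add: r_def nv)
qed

text \<open>On \<open>fib\<close>, \<open>inner\<close> is the real part of the Hermitian product, so this is the \<open>h\<close> of
  the proof idea.\<close>
definition higgs_form :: "mat \<Rightarrow> fib \<Rightarrow> real" where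
  "higgs_form P v = inner v (cvscale \<i> (P *v v))"

lemma inner_skew_hermitian_self:
  assumes "madj B = - B"
  shows "inner v (B *v v) = 0"
  using skew_hermitian_entries[OF assms]
  by (simp add: inner_vec_def sum_2 matrix_vector_mult_def inner_complex_def algebra_simps)

lemma higgs_form_cvscale: "higgs_form P (cvscale c v) = (cmod c)\<^sup>2 * higgs_form P v"
  unfolding cmod_power2
  by (simp add: higgs_form_def cvscale_def matrix_vector_mult_def inner_vec_def sum_2
      inner_complex_def algebra_simps power2_eq_square)

lemma higgs_form_scaleR: "higgs_form P (r *\<^sub>R v) = r\<^sup>2 * higgs_form P v"
  using higgs_form_cvscale[of P "complex_of_real r" v] by (simp add: cvscale_of_real)

lemma higgs_form_uminus: "higgs_form (- Q) v = - higgs_form Q v"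
  by (simp add: higgs_form_def bounded_bilinear.minus_left[OF bounded_bilinear_matrix_vector_mult]
      cvscale_uminus)

lemma abs_higgs_form_le: "\<bar>higgs_form Q v\<bar> \<le> mnorm Q * (norm v)\<^sup>2"
proof -
  have "\<bar>higgs_form Q v\<bar> \<le> norm v * norm (cvscale \<i> (Q *v v))"
    unfolding higgs_form_def by (rule Cauchy_Schwarz_ineq2)
  also have "\<dots> \<le> norm v * (mnorm Q * norm v)"
    by (intro mult_left_mono) (auto simp: norm_cvscale norm_matrix_vector_mult_le)
  finally show ?thesis by (simp add: power2_eq_square mult_ac)
qed

text \<open>The left-hand side is the derivative of \<open>higgs_form (P t) (s t)\<close> along a solution of
  \<open>s' = i P s - B s\<close> (with \<open>v = s t\<close> and \<open>Q = P'\<close>), so \<open>Q + [B, P]\<close> is the covariant derivative.\<close>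
lemma higgs_form_derivative_identity:
  assumes "su2 P" "madj B = - B"
  shows "inner (cvscale \<i> (P *v v) - B *v v) (cvscale \<i> (P *v v))
       + inner v (cvscale \<i> (P *v (cvscale \<i> (P *v v) - B *v v) + Q *v v))
       = 2 * (mnorm P)\<^sup>2 * (norm v)\<^sup>2 + higgs_form (Q + mcomm B P) v"
  unfolding mnorm_su2(1)[OF assms(1)] cmod_power2 power2_norm_eq_inner
  using su2_entries[OF assms(1)] skew_hermitian_entries[OF assms(2)]
  by (simp add: higgs_form_def mcomm_def cvscale_def inner_vec_def sum_2 matrix_vector_mult_def
      matrix_matrix_mult_def inner_complex_def algebra_simps power2_eq_square)

lemma higgs_form_diff:
  assumes "su2 P"
  shows "higgs_form P b - higgs_form P a = inner (a + b) (cvscale \<i> (P *v (b - a)))"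
  using su2_entries[OF assms]
  by (simp add: higgs_form_def cvscale_def inner_vec_def sum_2 matrix_vector_mult_def
      inner_complex_def algebra_simps)

lemma higgs_form_axis_sum:
  assumes "su2 P"
  shows "higgs_form P (axis 1 1) + higgs_form P (axis 2 1) = 0"
  using su2_entries[OF assms]
  by (simp add: higgs_form_def axis_def cvscale_def inner_vec_def sum_2 matrix_vector_mult_def
      inner_complex_def)

lemma exists_higgs_form_nonpos_image:
  fixes L :: "fib \<Rightarrow> fib"
  assumes "su2 Q" and L: "linear L"
  obtains w where "w \<noteq> 0" and "higgs_form Q (L w) \<le> 0"
proof -
  obtain e :: fib where e: "e \<noteq> 0" "higgs_form Q e \<le> 0"
  proof (cases "higgs_form Q (axis 1 1) \<le> 0")
    case True
    then show thesis using that[of "axis 1 1"] by (simp add: axis_eq_0_iff)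
  next
    case False
    then show thesis
      using that[of "axis 2 1"] higgs_form_axis_sum[OF assms(1)] by (simp add: axis_eq_0_iff)
  qed
  show thesis
  proof (cases "inj L")
    case True
    then obtain w where "L w = e"
      using linear_injective_imp_surjective[OF L] by (metis surjD)
    moreover have "w \<noteq> 0" using calculation e(1) linear_0[OF L] by auto
    ultimately show thesis using that e(2) by blast
  next
    case False
    then obtain w where "w \<noteq> 0" "L w = 0" using linear_injective_0[OF L] by auto
    then show thesis using that by (simp add: higgs_form_def)
  qed
qed

section \<open>Solutions along a slowly varying line\<close>

lemma exp_lower_bound_of_derivative_ge:
  fixes q :: "real \<Rightarrow> real"
  assumes deriv: "\<And>x. a \<le> x \<Longrightarrow> \<exists>D. (q has_real_derivative D) (at x) \<and> c * q x \<le> D"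
    and "a \<le> b"
  shows "q a * exp (c * (b - a)) \<le> q b"
proof -
  define r where "r x = q x * exp (- c * x)" for x
  have "r a \<le> r b"
  proof (rule DERIV_nonneg_imp_nondecreasing[OF \<open>a \<le> b\<close>])
    fix x assume "a \<le> x" "x \<le> b"
    then obtain D where D: "(q has_real_derivative D) (at x)" "c * q x \<le> D" using deriv by blast
    have "(r has_real_derivative (D - c * q x) * exp (- c * x)) (at x)"
      unfolding r_def by (auto intro!: derivative_eq_intros D(1) simp: algebra_simps)
    then show "\<exists>y. (r has_real_derivative y) (at x) \<and> 0 \<le> y" using D(2) by auto
  qed
  then have "q a * exp (- c * a) * exp (c * b) \<le> q b * exp (- c * b) * exp (c * b)"
    by (simp add: r_def)
  then show ?thesis by (simp add: mult.assoc exp_add[symmetric] algebra_simps)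
qed

definition solves_line_eq :: "(real \<Rightarrow> mat) \<Rightarrow> (real \<Rightarrow> mat) \<Rightarrow> (real \<Rightarrow> fib) \<Rightarrow> bool" where
  "solves_line_eq P B s \<longleftrightarrow>
     (\<forall>t. (s has_vector_derivative cvscale \<i> (P t *v s t) - B t *v s t) (at t))"

lemma solves_line_eq_add:
  assumes "solves_line_eq P B s1" "solves_line_eq P B s2"
  shows "solves_line_eq P B (\<lambda>t. s1 t + s2 t)"
  using assms unfolding solves_line_eq_def
  by (auto simp: algebra_simps matrix_vector_right_distrib
      linear_add[OF bounded_linear.linear[OF bounded_linear_cvscale]]
      intro!: has_vector_derivative_add[THEN has_vector_derivative_eq_rhs])

lemma solves_line_eq_cvscale:
  assumes "solves_line_eq P B s"
  shows "solves_line_eq P B (\<lambda>t. cvscale c (s t))"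
  unfolding solves_line_eq_def
proof
  fix t
  have "(s has_vector_derivative cvscale \<i> (P t *v s t) - B t *v s t) (at t)"
    using assms by (simp add: solves_line_eq_def)
  from bounded_linear.has_vector_derivative[OF bounded_linear_cvscale this]
  have "((\<lambda>t. cvscale c (s t)) has_vector_derivative
      cvscale c (cvscale \<i> (P t *v s t) - B t *v s t)) (at t)" .
  moreover have "cvscale c (cvscale \<i> (P t *v s t) - B t *v s t)
      = cvscale \<i> (P t *v cvscale c (s t)) - B t *v cvscale c (s t)"
    by (simp add: cvscale_def matrix_vector_mult_def vec_eq_iff sum_distrib_left algebra_simps)
  ultimately show "((\<lambda>t. cvscale c (s t)) has_vector_derivative
      cvscale \<i> (P t *v cvscale c (s t)) - B t *v cvscale c (s t)) (at t)"
    by simp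
qed

definition line_generator :: "(real \<Rightarrow> mat) \<Rightarrow> (real \<Rightarrow> mat) \<Rightarrow> real \<Rightarrow> fib \<Rightarrow>\<^sub>L fib" where
  "line_generator P B t = Blinfun (\<lambda>v. cvscale \<i> (P t *v v) - B t *v v)"

lemma line_generator_apply: "line_generator P B t v = cvscale \<i> (P t *v v) - B t *v v"
proof -
  have "bounded_linear (\<lambda>v. cvscale \<i> (P t *v v) - B t *v v)"
    by (rule bounded_linear_sub[OF bounded_linear_compose[OF bounded_linear_cvscale
          matrix_vector_mul_bounded_linear] matrix_vector_mul_bounded_linear])
  then show ?thesis
    unfolding line_generator_def by (simp add: bounded_linear_Blinfun_apply)
qed

lemma continuous_on_line_generator:
  assumes "continuous_on UNIV P" and "continuous_on UNIV B"
  shows "continuous_on UNIV (line_generator P B)"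
proof (rule continuous_on_blinfun_componentwise)
  note matrix_vector_mult_left = bounded_bilinear.bounded_linear_left[OF bounded_bilinear_matrix_vector_mult]
  show "continuous_on UNIV (\<lambda>t. line_generator P B t v)" for v
    unfolding line_generator_apply
    by (intro continuous_on_diff bounded_linear.continuous_on[OF bounded_linear_cvscale]
        bounded_linear.continuous_on[OF matrix_vector_mult_left] assms)
qed

lemma solves_line_eq_fundamental_solution:
  assumes "continuous_on UNIV P" and "continuous_on UNIV B"
  shows "solves_line_eq P B (\<lambda>t. fundamental_solution (line_generator P B) t v)"
  unfolding solves_line_eq_def
  using bounded_linear.has_vector_derivative[OF blinfun.bounded_linear_left
      fundamental_solution_has_vector_derivative[OF continuous_on_line_generator[OF assms]]]
  by (simp add: line_generator_apply)

text \<open>Along a far line, \<open>P\<close> is the Higgs field, \<open>B\<close> the connection form in the direction of the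
  line, and \<open>P' + [B, P]\<close> the covariant derivative of the Higgs field.\<close>
locale slowly_varying_line =
  fixes P B P' :: "real \<Rightarrow> mat"
  assumes su2_P: "\<And>t. su2 (P t)"
    and skew_B: "\<And>t. madj (B t) = - B t"
    and P_deriv: "\<And>t. (P has_vector_derivative P' t) (at t)"
    and mnorm_P_ge: "\<And>t. 3/4 \<le> mnorm (P t)"
    and mnorm_P_le: "\<And>t. mnorm (P t) \<le> 5/4"
    and mnorm_covariant_deriv_le: "\<And>t. mnorm (P' t + mcomm (B t) (P t)) \<le> 1/8"
    and continuous_B: "continuous_on UNIV B"
begin

lemma norm_sq_has_derivative:
  assumes "solves_line_eq P B s"
  shows "((\<lambda>t. (norm (s t))\<^sup>2) has_real_derivative 2 * higgs_form (P t) (s t)) (at t)"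
proof -
  let ?s' = "cvscale \<i> (P t *v s t) - B t *v s t"
  have "((\<lambda>t. inner (s t) (s t)) has_vector_derivative inner (s t) ?s' + inner ?s' (s t)) (at t)"
    using assms unfolding solves_line_eq_def
    by (intro bounded_bilinear.has_vector_derivative[OF bounded_bilinear_inner]) auto
  moreover have "inner (s t) ?s' = higgs_form (P t) (s t)"
    by (simp add: higgs_form_def inner_diff_right inner_skew_hermitian_self[OF skew_B])
  ultimately show ?thesis
    by (simp add: power2_norm_eq_inner inner_commute has_real_derivative_iff_has_vector_derivative)
qed

lemma higgs_form_has_derivative_ge:
  assumes "solves_line_eq P B s"
  obtains H where "((\<lambda>t. higgs_form (P t) (s t)) has_real_derivative H) (at t)"
    and "(norm (s t))\<^sup>2 \<le> H"
proof
  let ?s' = "cvscale \<i> (P t *v s t) - B t *v s t"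
  define H where "H = inner ?s' (cvscale \<i> (P t *v s t))
    + inner (s t) (cvscale \<i> (P t *v ?s' + P' t *v s t))"
  have "((\<lambda>t. P t *v s t) has_vector_derivative P t *v ?s' + P' t *v s t) (at t)"
    using assms P_deriv unfolding solves_line_eq_def
    by (intro bounded_bilinear.has_vector_derivative[OF bounded_bilinear_matrix_vector_mult]) auto
  then have "((\<lambda>t. cvscale \<i> (P t *v s t)) has_vector_derivative
      cvscale \<i> (P t *v ?s' + P' t *v s t)) (at t)"
    by (rule bounded_linear.has_vector_derivative[OF bounded_linear_cvscale])
  then have "((\<lambda>t. higgs_form (P t) (s t)) has_vector_derivative H) (at t)"
    using assms unfolding higgs_form_def solves_line_eq_def H_def
    by (subst add.commute, intro bounded_bilinear.has_vector_derivative[OF bounded_bilinear_inner]) auto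
  then show "((\<lambda>t. higgs_form (P t) (s t)) has_real_derivative H) (at t)"
    by (simp add: has_real_derivative_iff_has_vector_derivative)
  have H: "H = 2 * (mnorm (P t))\<^sup>2 * (norm (s t))\<^sup>2 + higgs_form (P' t + mcomm (B t) (P t)) (s t)"
    unfolding H_def by (rule higgs_form_derivative_identity[OF su2_P skew_B])
  have "(3/4)\<^sup>2 \<le> (mnorm (P t))\<^sup>2"
    using mnorm_P_ge by (intro power_mono) auto
  then have "9/8 * (norm (s t))\<^sup>2 \<le> 2 * (mnorm (P t))\<^sup>2 * (norm (s t))\<^sup>2"
    by (intro mult_right_mono) (auto simp: power2_eq_square)
  moreover have "\<bar>higgs_form (P' t + mcomm (B t) (P t)) (s t)\<bar> \<le> 1/8 * (norm (s t))\<^sup>2"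
    by (rule order_trans[OF abs_higgs_form_le])
       (intro mult_right_mono mnorm_covariant_deriv_le zero_le_power2)
  ultimately show "(norm (s t))\<^sup>2 \<le> H"
    unfolding H by linarith
qed

lemma higgs_form_mono:
  assumes "solves_line_eq P B s" and "a \<le> b"
  shows "higgs_form (P a) (s a) \<le> higgs_form (P b) (s b)"
proof (rule DERIV_nonneg_imp_nondecreasing[OF \<open>a \<le> b\<close>])
  fix x
  obtain H where "((\<lambda>t. higgs_form (P t) (s t)) has_real_derivative H) (at x)" "(norm (s x))\<^sup>2 \<le> H"
    using higgs_form_has_derivative_ge[OF assms(1)] .
  then show "\<exists>y. ((\<lambda>t. higgs_form (P t) (s t)) has_real_derivative y) (at x) \<and> 0 \<le> y"
    using zero_le_power2 order_trans by blast
qed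

lemma higgs_form_add_half_norm_sq_has_derivative_ge:
  assumes "solves_line_eq P B s"
  shows "\<exists>D. ((\<lambda>t. higgs_form (P t) (s t) + (norm (s t))\<^sup>2 / 2) has_real_derivative D) (at x)
           \<and> 1 * (higgs_form (P x) (s x) + (norm (s x))\<^sup>2 / 2) \<le> D"
proof -
  obtain H where H: "((\<lambda>t. higgs_form (P t) (s t)) has_real_derivative H) (at x)"
    "(norm (s x))\<^sup>2 \<le> H"
    using higgs_form_has_derivative_ge[OF assms] .
  have "((\<lambda>t. higgs_form (P t) (s t) + (norm (s t))\<^sup>2 / 2) has_real_derivative
      H + 2 * higgs_form (P x) (s x) / 2) (at x)"
    by (intro DERIV_add H(1) DERIV_cdivide norm_sq_has_derivative[OF assms])
  moreover have "higgs_form (P x) (s x) + (norm (s x))\<^sup>2 / 2 \<le> H + higgs_form (P x) (s x)"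
    using H(2) zero_le_power2[of "norm (s x)"] by linarith
  ultimately show ?thesis by auto
qed

lemma abs_higgs_form_P_le: "\<bar>higgs_form (P t) v\<bar> \<le> 5/4 * (norm v)\<^sup>2"
  by (rule order_trans[OF abs_higgs_form_le]) (intro mult_right_mono mnorm_P_le zero_le_power2)

lemma higgs_form_le_of_tendsto_at_top:
  assumes sol: "solves_line_eq P B s" and lim: "(s \<longlongrightarrow> 0) at_top"
  shows "higgs_form (P t0) (s t0) \<le> - (norm (s t0))\<^sup>2 / 2"
proof (rule ccontr)
  define q where "q t = higgs_form (P t) (s t) + (norm (s t))\<^sup>2 / 2" for t
  assume "\<not> ?thesis"
  then have q0: "q t0 > 0" by (simp add: q_def)
  have lower: "4/7 * q t0 \<le> (norm (s t))\<^sup>2" if "t0 \<le> t" for t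
  proof -
    have "q t0 \<le> q t0 * exp (1 * (t - t0))" using q0 that by simp
    also have "\<dots> \<le> q t"
      unfolding q_def by (rule exp_lower_bound_of_derivative_ge[OF higgs_form_add_half_norm_sq_has_derivative_ge[OF sol] that])
    also have "\<dots> \<le> 7/4 * (norm (s t))\<^sup>2"
      using abs_higgs_form_P_le[of t "s t"] by (simp add: q_def abs_le_iff)
    finally show ?thesis by simp
  qed
  have "((\<lambda>t. (norm (s t))\<^sup>2) \<longlongrightarrow> 0) at_top"
    using tendsto_power[OF tendsto_norm[OF lim], of 2] by simp
  then have "\<forall>\<^sub>F t in at_top. (norm (s t))\<^sup>2 < 4/7 * q t0"
    by (rule order_tendstoD(2)) (use q0 in simp)
  then obtain N where "\<And>t. N \<le> t \<Longrightarrow> (norm (s t))\<^sup>2 < 4/7 * q t0"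
    unfolding eventually_at_top_linorder by blast
  then show False
    using lower[of "max N t0"] by (meson max.cobounded1 max.cobounded2 not_le)
qed

lemma higgs_form_add_half_norm_sq_nonpos:
  assumes sol: "solves_line_eq P B s" and nonpos: "\<And>t. 0 \<le> t \<Longrightarrow> higgs_form (P t) (s t) \<le> 0"
    and "0 \<le> t"
  shows "higgs_form (P t) (s t) + (norm (s t))\<^sup>2 / 2 \<le> 0"
proof (rule ccontr)
  define n where "n t = (norm (s t))\<^sup>2" for t
  define q where "q t = higgs_form (P t) (s t) + n t / 2" for t
  assume "\<not> ?thesis"
  then have qt: "q t > 0" by (simp add: q_def n_def)
  text \<open>\<open>q\<close> grows exponentially, but stays below the nonincreasing \<open>n/2\<close>.\<close>
  define u where "u = t + n t / (2 * q t) + 1"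
  have tu: "t \<le> u" using qt by (simp add: u_def n_def)
  have "n u \<le> n t"
    using norm_sq_has_derivative[OF sol] nonpos \<open>0 \<le> t\<close> tu unfolding n_def
    by (intro DERIV_nonpos_imp_nonincreasing[OF tu]) (fastforce simp: mult_le_0_iff)
  have "q t * (1 + (u - t)) \<le> q t * exp (1 * (u - t))"
    using qt by (intro mult_left_mono) auto
  also have "\<dots> \<le> q u"
    unfolding q_def n_def
    by (rule exp_lower_bound_of_derivative_ge[OF higgs_form_add_half_norm_sq_has_derivative_ge[OF sol] tu])
  also have "\<dots> \<le> n t / 2"
    using nonpos[of u] \<open>n u \<le> n t\<close> \<open>0 \<le> t\<close> tu by (simp add: q_def)
  finally show False
    using qt mult_pos_pos[OF qt qt] by (simp add: u_def field_simps)
qed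

lemma tendsto_at_top_of_higgs_form_nonpos:
  assumes sol: "solves_line_eq P B s" and nonpos: "\<And>t. 0 \<le> t \<Longrightarrow> higgs_form (P t) (s t) \<le> 0"
  shows "(s \<longlongrightarrow> 0) at_top"
proof -
  define n where "n t = (norm (s t))\<^sup>2" for t
  have "- n 0 * exp (- 1 * (t - 0)) \<le> - n t" if "0 \<le> t" for t
  proof (rule exp_lower_bound_of_derivative_ge[OF _ that])
    fix x :: real assume "0 \<le> x"
    have "higgs_form (P x) (s x) + n x / 2 \<le> 0"
      unfolding n_def by (rule higgs_form_add_half_norm_sq_nonpos[OF sol nonpos \<open>0 \<le> x\<close>])
    then show "\<exists>D. ((\<lambda>t. - n t) has_real_derivative D) (at x) \<and> - 1 * - n x \<le> D"
      using DERIV_minus[OF norm_sq_has_derivative[OF sol, of x]]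
      by (intro exI[of _ "- (2 * higgs_form (P x) (s x))"]) (auto simp: n_def)
  qed
  then have upper: "\<forall>\<^sub>F t in at_top. n t \<le> n 0 * exp (- t)"
    unfolding eventually_at_top_linorder by auto
  have "((\<lambda>t. n 0 * exp (- t)) \<longlongrightarrow> 0) at_top"
    by (intro tendsto_mult_right_zero filterlim_compose[OF exp_at_bot filterlim_uminus_at_bot_at_top])
  then have "(n \<longlongrightarrow> 0) at_top"
    by (intro tendsto_sandwich[OF _ upper tendsto_const]) (simp add: n_def)
  then have "((\<lambda>t. norm (s t)) \<longlongrightarrow> 0) at_top"
    using tendsto_real_sqrt[of n 0 at_top] by (simp add: n_def)
  then show ?thesis by (rule tendsto_norm_zero_cancel)
qed

lemma continuous_P: "continuous_on UNIV P"
  using P_deriv by (meson continuous_at_imp_continuous_on has_vector_derivative_continuous)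

lemma exists_unit_higgs_form_nonpos_before:
  defines "U \<equiv> fundamental_solution (line_generator P B)"
  shows "\<exists>v\<in>sphere 0 1. \<forall>t\<le>T. higgs_form (P t) (U t v) \<le> 0"
proof -
  have sol: "solves_line_eq P B (\<lambda>t. U t v)" for v
    unfolding U_def by (rule solves_line_eq_fundamental_solution[OF continuous_P continuous_B])
  obtain w where w: "w \<noteq> 0" "higgs_form (P T) (U T w) \<le> 0"
    using exists_higgs_form_nonpos_image[OF su2_P bounded_linear.linear[OF blinfun.bounded_linear_right]] .
  have nonpos: "higgs_form (P t) (U t w) \<le> 0" if "t \<le> T" for t
    using higgs_form_mono[OF sol that, of w] w(2) by linarith
  have "higgs_form (P t) (U t (w /\<^sub>R norm w)) \<le> 0" if "t \<le> T" for t
    unfolding blinfun.scaleR_right higgs_form_scaleR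
    by (rule mult_nonneg_nonpos[OF zero_le_power2 nonpos[OF that]])
  moreover have "w /\<^sub>R norm w \<in> sphere 0 1" using w(1) by simp
  ultimately show ?thesis by blast
qed

lemma exists_decaying_solution_at_top:
  obtains s where "solves_line_eq P B s" and "s 0 \<noteq> 0" and "(s \<longlongrightarrow> 0) at_top"
proof -
  define U where "U = fundamental_solution (line_generator P B)"
  have sol: "solves_line_eq P B (\<lambda>t. U t v)" for v
    unfolding U_def by (rule solves_line_eq_fundamental_solution[OF continuous_P continuous_B])
  text \<open>Unit initial values with \<open>h \<le> 0\<close> on \<open>(-\<infinity>, k]\<close> accumulate at one with \<open>h \<le> 0\<close> everywhere.\<close>
  have "\<exists>f. \<forall>k::nat. f k \<in> sphere 0 1 \<and> (\<forall>t\<le>real k. higgs_form (P t) (U t (f k)) \<le> 0)"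
    using exists_unit_higgs_form_nonpos_before unfolding U_def by (intro choice) blast
  then obtain f where f: "\<And>k. f k \<in> sphere 0 1"
    and f_nonpos: "\<And>k t. t \<le> real k \<Longrightarrow> higgs_form (P t) (U t (f k)) \<le> 0"
    by blast
  obtain l r where l: "l \<in> sphere 0 1" and r: "strict_mono (r :: nat \<Rightarrow> nat)" and lim: "(f \<circ> r) \<longlonglongrightarrow> l"
    using seq_compactE[OF compact_imp_seq_compact[OF compact_sphere], of f] f by metis
  have "higgs_form (P t) (U t l) \<le> 0" for t
  proof (rule LIMSEQ_le_const2)
    have "(\<lambda>n. U t (f (r n))) \<longlonglongrightarrow> U t l"
      using bounded_linear.tendsto[OF blinfun.bounded_linear_right lim] by (simp add: o_def)
    then show "(\<lambda>n. higgs_form (P t) (U t (f (r n)))) \<longlonglongrightarrow> higgs_form (P t) (U t l)"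
      unfolding higgs_form_def
      by (intro tendsto_inner bounded_linear.tendsto[OF bounded_linear_cvscale]
          bounded_linear.tendsto[OF matrix_vector_mul_bounded_linear])
    show "\<exists>N. \<forall>n\<ge>N. higgs_form (P t) (U t (f (r n))) \<le> 0"
    proof (intro exI allI impI)
      fix n assume "nat \<lceil>t\<rceil> \<le> n"
      then have "t \<le> real (r n)"
        using seq_suble[OF r, of n] by linarith
      then show "higgs_form (P t) (U t (f (r n))) \<le> 0" by (rule f_nonpos)
    qed
  qed
  then have "((\<lambda>t. U t l) \<longlongrightarrow> 0) at_top"
    by (intro tendsto_at_top_of_higgs_form_nonpos[OF sol]) simp
  moreover have "U 0 l \<noteq> 0" using l by (auto simp: U_def fundamental_solution_0)
  ultimately show thesis using that sol by blast
qed

end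

lemma solves_line_eq_mirror:
  assumes "solves_line_eq P B s"
  shows "solves_line_eq (\<lambda>t. - P (- t)) (\<lambda>t. - B (- t)) (\<lambda>t. s (- t))"
  unfolding solves_line_eq_def
proof
  fix t
  have "(s has_vector_derivative cvscale \<i> (P (- t) *v s (- t)) - B (- t) *v s (- t)) (at (- t))"
    using assms by (simp add: solves_line_eq_def)
  from has_vector_derivative_mirror[OF this]
  show "((\<lambda>t. s (- t)) has_vector_derivative
      cvscale \<i> ((- P (- t)) *v s (- t)) - (- B (- t)) *v s (- t)) (at t)"
    by (simp add: bounded_bilinear.minus_left[OF bounded_bilinear_matrix_vector_mult] cvscale_uminus)
qed

lemma (in slowly_varying_line) mirror:
  "slowly_varying_line (\<lambda>t. - P (- t)) (\<lambda>t. - B (- t)) (\<lambda>t. P' (- t))"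
proof
  fix t
  show "su2 (- P (- t))"
    using su2_P[of "- t"] by (simp add: su2_def madj_def vec_eq_iff add_eq_0_iff)
  show "madj (- B (- t)) = - (- B (- t))"
    using skew_B[of "- t"] by (simp add: madj_def vec_eq_iff)
  show "((\<lambda>t. - P (- t)) has_vector_derivative P' (- t)) (at t)"
    using has_vector_derivative_minus[OF has_vector_derivative_mirror[OF P_deriv]] by simp
  show "3/4 \<le> mnorm (- P (- t))" "mnorm (- P (- t)) \<le> 5/4"
    using mnorm_P_ge mnorm_P_le by (simp_all add: mnorm_uminus)
  show "mnorm (P' (- t) + mcomm (- B (- t)) (- P (- t))) \<le> 1/8"
    using mnorm_covariant_deriv_le[of "- t"] by (simp add: mcomm_uminus)
  show "continuous_on UNIV (\<lambda>t. - B (- t))"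
    by (intro continuous_intros continuous_on_compose2[OF continuous_B]) auto
qed

section \<open>The splitting \<open>E\<^sub>x = L\<^sup>+ \<oplus> L\<^sup>-\<close>\<close>

definition decay_space :: "(real \<Rightarrow> mat) \<Rightarrow> (real \<Rightarrow> mat) \<Rightarrow> real filter \<Rightarrow> fib set" where
  "decay_space P B F = {s 0 | s. solves_line_eq P B s \<and> (s \<longlongrightarrow> 0) F}"

definition complex_subspace :: "fib set \<Rightarrow> bool" where
  "complex_subspace L \<longleftrightarrow> (\<forall>a\<in>L. \<forall>b\<in>L. a + b \<in> L) \<and> (\<forall>c. \<forall>a\<in>L. cvscale c a \<in> L)"

lemma complex_subspace_diff:
  assumes "complex_subspace L" "a \<in> L" "b \<in> L"
  shows "a - b \<in> L"
proof -
  have "cvscale (-1) b = - b" by (simp add: cvscale_def vec_eq_iff)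
  then show ?thesis using assms unfolding complex_subspace_def by (metis diff_conv_add_uminus)
qed

lemma complex_subspace_decay_space: "complex_subspace (decay_space P B F)"
  unfolding complex_subspace_def decay_space_def
proof safe
  fix s1 s2 assume "solves_line_eq P B s1" "(s1 \<longlongrightarrow> 0) F" "solves_line_eq P B s2" "(s2 \<longlongrightarrow> 0) F"
  then show "\<exists>s. s1 0 + s2 0 = s 0 \<and> solves_line_eq P B s \<and> (s \<longlongrightarrow> 0) F"
    by (intro exI[of _ "\<lambda>t. s1 t + s2 t"]) (auto intro: solves_line_eq_add tendsto_add_zero)
next
  fix c s assume "solves_line_eq P B s" "(s \<longlongrightarrow> 0) F"
  then show "\<exists>s'. cvscale c (s 0) = s' 0 \<and> solves_line_eq P B s' \<and> (s' \<longlongrightarrow> 0) F"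
    using bounded_linear.tendsto[OF bounded_linear_cvscale, of s 0 F c]
    by (intro exI[of _ "\<lambda>t. cvscale c (s t)"]) (auto intro: solves_line_eq_cvscale)
qed

lemma fib_spanning_pair:
  fixes a b :: fib
  assumes a: "a \<noteq> 0" and independent: "\<And>z. b \<noteq> cvscale z a"
  obtains x y where "v = cvscale x a + cvscale y b"
proof -
  define d where "d = a$1 * b$2 - a$2 * b$1"
  have "d \<noteq> 0"
  proof
    assume d0: "d = 0"
    have "b = cvscale (if a$1 = 0 then b$2 / a$2 else b$1 / a$1) a"
      using a d0 by (auto simp: d_def vec_eq_iff forall_2 cvscale_def field_simps)
    then show False using independent by blast
  qed
  have coeff: "c = x / d * p + y / d * q" if "x * p + y * q = c * d" for x y p q c :: complex
    using that \<open>d \<noteq> 0\<close> by (simp add: add_divide_distrib[symmetric])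
  have "v$1 = (v$1 * b$2 - v$2 * b$1) / d * a$1 + (a$1 * v$2 - a$2 * v$1) / d * b$1"
    by (rule coeff) (simp add: d_def algebra_simps)
  moreover have "v$2 = (v$1 * b$2 - v$2 * b$1) / d * a$2 + (a$1 * v$2 - a$2 * v$1) / d * b$2"
    by (rule coeff) (simp add: d_def algebra_simps)
  ultimately have "v = cvscale ((v$1 * b$2 - v$2 * b$1) / d) a + cvscale ((a$1 * v$2 - a$2 * v$1) / d) b"
    by (simp add: vec_eq_iff forall_2 cvscale_def)
  then show thesis by (rule that)
qed

lemma fib_direct_sum:
  assumes L1: "complex_subspace L1" and L2: "complex_subspace L2"
    and a0: "a0 \<in> L1" "a0 \<noteq> 0" and b0: "b0 \<in> L2" "b0 \<noteq> 0" and transversal: "L1 \<inter> L2 \<subseteq> {0}"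
  obtains a b where "a \<in> L1" "b \<in> L2" "v = a + b"
    and "(THE w. \<exists>a\<in>L1. \<exists>b\<in>L2. v = a + b \<and> w = a - b) = a - b"
proof -
  have "b0 \<noteq> cvscale z a0" for z
    using a0 b0 L1 transversal unfolding complex_subspace_def by blast
  then obtain x y where xy: "v = cvscale x a0 + cvscale y b0"
    using fib_spanning_pair[OF a0(2)] by blast
  define a b where "a = cvscale x a0" and "b = cvscale y b0"
  have ab: "a \<in> L1" "b \<in> L2" "v = a + b"
    using L1 L2 a0 b0 xy unfolding complex_subspace_def a_def b_def by auto
  have "w = a - b" if "a' \<in> L1" "b' \<in> L2" "v = a' + b'" "w = a' - b'" for w a' b'
  proof -
    have "a - a' = b' - b" using ab(3) that(3) by (simp add: algebra_simps)
    moreover have "a - a' \<in> L1" "b' - b \<in> L2"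
      using complex_subspace_diff L1 L2 ab that by auto
    ultimately have "a - a' = 0" using transversal by auto
    then show ?thesis using ab(3) that(3,4) by (simp add: algebra_simps)
  qed
  then have "(THE w. \<exists>a\<in>L1. \<exists>b\<in>L2. v = a + b \<and> w = a - b) = a - b"
    using ab by (intro the_equality) blast+
  with ab show thesis by (rule that)
qed

lemma norm_diff_le_of_higgs_form_cones:
  assumes su: "su2 Q" and a: "higgs_form Q a \<le> - (norm a)\<^sup>2 / 2"
    and b: "(norm b)\<^sup>2 / 2 \<le> higgs_form Q b"
  shows "norm (a - b) \<le> 4 * mnorm Q * norm (a + b)"
proof -
  have "higgs_form Q b - higgs_form Q a \<le> norm (a + b) * norm (cvscale \<i> (Q *v (b - a)))"
    unfolding higgs_form_diff[OF su] by (rule order_trans[OF abs_ge_self Cauchy_Schwarz_ineq2])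
  also have "\<dots> \<le> norm (a + b) * (mnorm Q * norm (a - b))"
    using norm_matrix_vector_mult_le[of Q "b - a"]
    by (intro mult_left_mono) (auto simp: norm_cvscale norm_minus_commute)
  finally have increment: "higgs_form Q b - higgs_form Q a \<le> norm (a + b) * (mnorm Q * norm (a - b))" .
  have "(norm (a - b))\<^sup>2 \<le> 2 * ((norm a)\<^sup>2 + (norm b)\<^sup>2)"
  proof -
    have "(norm (a - b))\<^sup>2 + (norm (a + b))\<^sup>2 = 2 * ((norm a)\<^sup>2 + (norm b)\<^sup>2)"
      by (simp add: power2_norm_eq_inner inner_diff_left inner_diff_right inner_add_left
          inner_add_right inner_commute)
    then show ?thesis using zero_le_power2[of "norm (a + b)"] by linarith
  qed
  also have "\<dots> \<le> 4 * (higgs_form Q b - higgs_form Q a)" using a b by (simp add: field_simps)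
  also have "\<dots> \<le> (4 * mnorm Q * norm (a + b)) * norm (a - b)"
    using increment by (simp add: mult_ac)
  finally show ?thesis
    using mnorm_nonneg[of Q]
    by (cases "norm (a - b) = 0") (auto simp: power2_eq_square mult_le_cancel_right)
qed

context slowly_varying_line
begin

lemma higgs_form_decay_space_at_top:
  assumes "a \<in> decay_space P B at_top"
  shows "higgs_form (P 0) a \<le> - (norm a)\<^sup>2 / 2"
  using assms higgs_form_le_of_tendsto_at_top unfolding decay_space_def by blast

lemma higgs_form_decay_space_at_bot:
  assumes "b \<in> decay_space P B at_bot"
  shows "(norm b)\<^sup>2 / 2 \<le> higgs_form (P 0) b"
proof -
  obtain s where s: "b = s 0" "solves_line_eq P B s" "(s \<longlongrightarrow> 0) at_bot"
    using assms by (auto simp: decay_space_def)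
  have "((\<lambda>t. s (- t)) \<longlongrightarrow> 0) at_top"
    by (rule filterlim_compose[OF s(3) filterlim_uminus_at_bot_at_top])
  from slowly_varying_line.higgs_form_le_of_tendsto_at_top[OF mirror solves_line_eq_mirror[OF s(2)] this, of 0]
  show ?thesis using s(1) by (simp add: higgs_form_uminus)
qed

lemma decay_space_at_top_nontrivial: "\<exists>a\<in>decay_space P B at_top. a \<noteq> 0"
  using exists_decaying_solution_at_top unfolding decay_space_def by blast

lemma decay_space_at_bot_nontrivial: "\<exists>b\<in>decay_space P B at_bot. b \<noteq> 0"
proof -
  obtain s where s: "solves_line_eq (\<lambda>t. - P (- t)) (\<lambda>t. - B (- t)) s" "s 0 \<noteq> 0" "(s \<longlongrightarrow> 0) at_top"
    by (rule slowly_varying_line.exists_decaying_solution_at_top[OF mirror])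
  have "solves_line_eq P B (\<lambda>t. s (- t))"
    using solves_line_eq_mirror[OF s(1)] by simp
  moreover have "((\<lambda>t. s (- t)) \<longlongrightarrow> 0) at_bot"
    by (rule filterlim_compose[OF s(3) filterlim_uminus_at_top_at_bot])
  ultimately show ?thesis using s(2) unfolding decay_space_def by force
qed

lemma onorm_splitting_le:
  "onorm (\<lambda>v. THE w. \<exists>a\<in>decay_space P B at_top. \<exists>b\<in>decay_space P B at_bot. v = a + b \<and> w = a - b)
    \<le> 5"
proof (rule onorm_le)
  fix v
  have transversal: "decay_space P B at_top \<inter> decay_space P B at_bot \<subseteq> {0}"
  proof
    fix x assume "x \<in> decay_space P B at_top \<inter> decay_space P B at_bot"
    then have "higgs_form (P 0) x \<le> - (norm x)\<^sup>2 / 2" "(norm x)\<^sup>2 / 2 \<le> higgs_form (P 0) x"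
      using higgs_form_decay_space_at_top higgs_form_decay_space_at_bot by auto
    then have "(norm x)\<^sup>2 \<le> 0" by linarith
    then show "x \<in> {0}" by simp
  qed
  obtain a b where ab: "a \<in> decay_space P B at_top" "b \<in> decay_space P B at_bot" "v = a + b"
    and the: "(THE w. \<exists>a\<in>decay_space P B at_top. \<exists>b\<in>decay_space P B at_bot. v = a + b \<and> w = a - b)
      = a - b"
    using fib_direct_sum[OF complex_subspace_decay_space complex_subspace_decay_space _ _ _ _ transversal]
      decay_space_at_top_nontrivial decay_space_at_bot_nontrivial by blast
  have "norm (a - b) \<le> 4 * mnorm (P 0) * norm (a + b)"
    by (rule norm_diff_le_of_higgs_form_cones[OF su2_P higgs_form_decay_space_at_top[OF ab(1)]
          higgs_form_decay_space_at_bot[OF ab(2)]])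
  also have "\<dots> \<le> 4 * (5/4) * norm (a + b)"
    using mnorm_P_le[of 0] by (intro mult_right_mono) auto
  finally show "norm (THE w. \<exists>a\<in>decay_space P B at_top. \<exists>b\<in>decay_space P B at_bot. v = a + b \<and> w = a - b)
      \<le> 5 * norm v"
    unfolding the ab(3)[symmetric] by simp
qed

end

section \<open>Far lines of a monopole\<close>

definition line_higgs :: "(pt \<Rightarrow> mat) \<Rightarrow> pt \<Rightarrow> pt \<Rightarrow> real \<Rightarrow> mat" where
  "line_higgs Phi x u t = Phi (x + t *\<^sub>R u)"

definition line_connection :: "(pt \<Rightarrow> 3 \<Rightarrow> mat) \<Rightarrow> pt \<Rightarrow> pt \<Rightarrow> real \<Rightarrow> mat" where
  "line_connection A x u t = (\<Sum>j\<in>UNIV. u $ j *\<^sub>R A (x + t *\<^sub>R u) j)"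

definition line_higgs_deriv :: "(pt \<Rightarrow> mat) \<Rightarrow> pt \<Rightarrow> pt \<Rightarrow> real \<Rightarrow> mat" where
  "line_higgs_deriv Phi x u t = (\<Sum>j\<in>UNIV. u $ j *\<^sub>R pd j Phi (x + t *\<^sub>R u))"

lemma line_sol_iff_solves_line_eq:
  "line_sol A Phi x u s \<longleftrightarrow> solves_line_eq (line_higgs Phi x u) (line_connection A x u) s"
proof -
  have "line_connection A x u t *v w
      = (\<Sum>j\<in>UNIV. cvscale (complex_of_real (u $ j)) (A (x + t *\<^sub>R u) j *v w))" for t w
    by (simp add: line_connection_def bounded_bilinear.sum_left[OF bounded_bilinear_matrix_vector_mult]
        bounded_bilinear.scaleR_left[OF bounded_bilinear_matrix_vector_mult] cvscale_of_real)
  then show ?thesis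
    by (simp add: line_sol_def solves_line_eq_def line_higgs_def)
qed

lemma Lplus_eq_decay_space:
  "Lplus A Phi x u = decay_space (line_higgs Phi x u) (line_connection A x u) at_top"
  unfolding Lplus_def decay_space_def line_sol_iff_solves_line_eq ..

lemma Lminus_eq_decay_space:
  "Lminus A Phi x u = decay_space (line_higgs Phi x u) (line_connection A x u) at_bot"
  unfolding Lminus_def decay_space_def line_sol_iff_solves_line_eq ..

lemma line_higgs_has_vector_derivative:
  assumes "\<And>y. Phi differentiable (at y)"
  shows "(line_higgs Phi x u has_vector_derivative line_higgs_deriv Phi x u t) (at t)"
proof -
  define y where "y = x + t *\<^sub>R u"
  define D where "D = frechet_derivative Phi (at y)"
  have D: "(Phi has_derivative D) (at y)"
    using assms[of y] unfolding D_def frechet_derivative_works .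
  have "((\<lambda>t. x + t *\<^sub>R u) has_derivative (\<lambda>h. h *\<^sub>R u)) (at t)"
    by (auto intro!: derivative_eq_intros)
  from has_derivative_compose[OF this D[unfolded y_def]]
  have "(line_higgs Phi x u has_derivative (\<lambda>h. D (h *\<^sub>R u))) (at t)"
    by (simp add: line_higgs_def[abs_def])
  moreover have "D u = line_higgs_deriv Phi x u t"
  proof -
    note linear_D = has_derivative_linear[OF D]
    have "D u = D (\<Sum>j\<in>UNIV. u $ j *\<^sub>R axis j 1)"
      using basis_expansion[of u] by (simp add: scalar_mult_eq_scaleR)
    also have "\<dots> = (\<Sum>j\<in>UNIV. u $ j *\<^sub>R D (axis j 1))"
      by (simp add: linear_sum[OF linear_D] linear_cmul[OF linear_D])
    finally have "D u = (\<Sum>j\<in>UNIV. u $ j *\<^sub>R D (axis j 1))" .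
    then show ?thesis
      by (simp add: line_higgs_deriv_def pd_def D_def y_def)
  qed
  ultimately show ?thesis
    using linear_cmul[OF has_derivative_linear[OF D]] by (simp add: has_vector_derivative_def)
qed

lemma line_covariant_derivative:
  "line_higgs_deriv Phi x u t + mcomm (line_connection A x u t) (line_higgs Phi x u t)
    = (\<Sum>j\<in>UNIV. u $ j *\<^sub>R covPhi A Phi j (x + t *\<^sub>R u))"
  by (simp add: line_higgs_deriv_def line_connection_def line_higgs_def covPhi_def
      linear_sum[OF linear_mcomm_left] linear_cmul[OF linear_mcomm_left] sum.distrib[symmetric]
      scaleR_add_right)

lemma slowly_varying_line_of_bounds:
  assumes A: "\<And>y j. su2 (A y j)" "\<And>j. continuous_on UNIV (\<lambda>y. A y j)"
    and Phi: "\<And>y. su2 (Phi y)" "\<And>y. Phi differentiable (at y)"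
    and u: "norm u = 1"
    and bounds: "\<And>t. 3/4 \<le> mnorm (Phi (x + t *\<^sub>R u)) \<and> mnorm (Phi (x + t *\<^sub>R u)) \<le> 5/4 \<and>
        (\<Sum>j\<in>UNIV. mnorm (covPhi A Phi j (x + t *\<^sub>R u))) \<le> 1/8"
  shows "slowly_varying_line (line_higgs Phi x u) (line_connection A x u) (line_higgs_deriv Phi x u)"
proof
  fix t
  show "su2 (line_higgs Phi x u t)" by (simp add: line_higgs_def Phi)
  show "madj (line_connection A x u t) = - line_connection A x u t"
    using A(1)
    by (simp add: line_connection_def linear_sum[OF linear_madj] linear_cmul[OF linear_madj] su2_def
        sum_negf)
  show "(line_higgs Phi x u has_vector_derivative line_higgs_deriv Phi x u t) (at t)"
    by (rule line_higgs_has_vector_derivative[OF Phi(2)])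
  show "3/4 \<le> mnorm (line_higgs Phi x u t)" "mnorm (line_higgs Phi x u t) \<le> 5/4"
    using bounds[of t] by (auto simp: line_higgs_def)
  have "mnorm (\<Sum>j\<in>UNIV. u $ j *\<^sub>R covPhi A Phi j (x + t *\<^sub>R u))
      \<le> (\<Sum>j\<in>UNIV. mnorm (covPhi A Phi j (x + t *\<^sub>R u)))"
  proof (rule order_trans[OF mnorm_sum_le sum_mono])
    fix j
    have "\<bar>u $ j\<bar> \<le> 1" using component_le_norm_cart[of u j] u by simp
    then show "mnorm (u $ j *\<^sub>R covPhi A Phi j (x + t *\<^sub>R u)) \<le> mnorm (covPhi A Phi j (x + t *\<^sub>R u))"
      using mnorm_nonneg by (simp add: mnorm_scaleR mult_left_le_one_le)
  qed
  then show "mnorm (line_higgs_deriv Phi x u t + mcomm (line_connection A x u t) (line_higgs Phi x u t))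
      \<le> 1/8"
    using bounds[of t] by (simp add: line_covariant_derivative)
next
  have "continuous_on UNIV (\<lambda>t. A (x + t *\<^sub>R u) j)" for j
    by (intro continuous_on_compose2[OF A(2)] continuous_intros) auto
  then show "continuous_on UNIV (line_connection A x u)"
    unfolding line_connection_def[abs_def] by (intro continuous_intros)
qed

lemma smooth_differentiable: "smooth f \<Longrightarrow> f differentiable (at x)"
  unfolding smooth_def by (metis iter_pd.simps(1))

lemma monopole_far_field:
  assumes "monopole k A Phi"
  obtains R where "R > 0" and "\<And>y :: pt. R \<le> norm y \<Longrightarrow>
      3/4 \<le> mnorm (Phi y) \<and> mnorm (Phi y) \<le> 5/4 \<and> (\<Sum>j\<in>UNIV. mnorm (covPhi A Phi j y)) \<le> 1/8"
proof -
  obtain C1 R1 where R1: "\<And>x. R1 \<le> norm x \<Longrightarrow>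
      \<bar>mnorm (Phi x) - (1 - real k / (2 * norm x))\<bar> \<le> C1 / (norm x)\<^sup>2"
    using assms unfolding monopole_def by blast
  obtain C2 R2 where R2: "\<And>x. R2 \<le> norm x \<Longrightarrow>
      (\<Sum>j\<in>UNIV. mnorm (covPhi A Phi j x)) \<le> C2 / (norm x)\<^sup>2"
    using assms unfolding monopole_def by blast
  have decay: "((\<lambda>r. C / r ^ n) \<longlongrightarrow> 0) at_top" if "n > 0" for C :: real and n
    by (intro tendsto_divide_0[OF tendsto_const] filterlim_at_top_imp_at_infinity
        filterlim_pow_at_top filterlim_ident that)
  have "\<forall>\<^sub>F r in at_top. 1 \<le> r \<and> R1 \<le> r \<and> R2 \<le> r \<and> real k / 2 / r ^ 1 < 1/8
      \<and> C1 / r\<^sup>2 < 1/8 \<and> C2 / r\<^sup>2 < 1/8"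
    by (intro eventually_conj eventually_ge_at_top order_tendstoD(2)[OF decay]) auto
  then obtain R where R: "\<And>r. R \<le> r \<Longrightarrow> 1 \<le> r \<and> R1 \<le> r \<and> R2 \<le> r \<and> real k / 2 / r < 1/8
      \<and> C1 / r\<^sup>2 < 1/8 \<and> C2 / r\<^sup>2 < 1/8"
    unfolding eventually_at_top_linorder by auto
  show thesis
  proof
    show "max R 1 > 0" by simp
    fix y :: pt assume "max R 1 \<le> norm y"
    then have r: "1 \<le> norm y" "R1 \<le> norm y" "R2 \<le> norm y" "real k / (2 * norm y) < 1/8"
      "C1 / (norm y)\<^sup>2 < 1/8" "C2 / (norm y)\<^sup>2 < 1/8"
      using R[of "norm y"] by (auto simp: divide_divide_eq_left)
    moreover have "0 \<le> real k / (2 * norm y)" by simp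
    ultimately show "3/4 \<le> mnorm (Phi y) \<and> mnorm (Phi y) \<le> 5/4 \<and>
        (\<Sum>j\<in>UNIV. mnorm (covPhi A Phi j y)) \<le> 1/8"
      using R1[OF r(2)] R2[OF r(3)] unfolding abs_le_iff by linarith
  qed
qed

lemma norm_closest_pt_line_ge:
  assumes "norm u = 1"
  shows "norm (closest_pt o0 p u - o0) - norm o0 \<le> norm (closest_pt o0 p u + t *\<^sub>R u)"
proof -
  define x where "x = closest_pt o0 p u"
  have "inner u u = 1" using assms by (simp add: power2_norm_eq_inner[symmetric])
  then have "inner (x - o0) u = 0"
    by (simp add: x_def closest_pt_def inner_diff_left inner_add_left inner_commute algebra_simps)
  then have "(norm (x + t *\<^sub>R u - o0))\<^sup>2 = (norm (x - o0))\<^sup>2 + t\<^sup>2"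
    using \<open>inner u u = 1\<close> unfolding power2_norm_eq_inner
    by (simp add: inner_add_left inner_add_right inner_diff_left inner_diff_right
        inner_commute power2_eq_square algebra_simps)
  then have "norm (x - o0) \<le> norm (x + t *\<^sub>R u - o0)"
    by (metis le_add_same_cancel1 norm_ge_zero power2_le_imp_le zero_le_power2)
  moreover have "norm (x + t *\<^sub>R u - o0) \<le> norm (x + t *\<^sub>R u) + norm o0"
    by (rule norm_triangle_ineq4)
  ultimately show ?thesis by (simp add: x_def)
qed

lemma monopole_far_lines_slowly_varying:
  assumes "monopole k A Phi"
  obtains R where "R > 0"
    and "\<And>x u. norm u = 1 \<Longrightarrow> (\<And>t. R \<le> norm (x + t *\<^sub>R u)) \<Longrightarrow>
      slowly_varying_line (line_higgs Phi x u) (line_connection A x u) (line_higgs_deriv Phi x u)"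
proof -
  obtain R where "R > 0" and far: "\<And>y. R \<le> norm y \<Longrightarrow>
      3/4 \<le> mnorm (Phi y) \<and> mnorm (Phi y) \<le> 5/4 \<and> (\<Sum>j\<in>UNIV. mnorm (covPhi A Phi j y)) \<le> 1/8"
    using monopole_far_field[OF assms] by blast
  have A: "\<And>y j. su2 (A y j)" "\<And>j. continuous_on UNIV (\<lambda>y. A y j)"
    and Phi: "\<And>y. su2 (Phi y)" "\<And>y. Phi differentiable (at y)"
    using assms smooth_differentiable
    by (auto simp: monopole_def intro!: continuous_at_imp_continuous_on differentiable_imp_continuous_within)
  show thesis
  proof (rule that[OF \<open>R > 0\<close>])
    fix x u :: pt assume "norm u = 1" and "\<And>t. R \<le> norm (x + t *\<^sub>R u)"
    then show "slowly_varying_line (line_higgs Phi x u) (line_connection A x u) (line_higgs_deriv Phi x u)"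
      using far by (intro slowly_varying_line_of_bounds[OF A Phi]) blast+
  qed
qed

theorem mainTheorem7:
  fixes k :: nat and A :: "pt \<Rightarrow> 3 \<Rightarrow> mat" and Phi :: "pt \<Rightarrow> mat" and o0 :: pt
  assumes "monopole k A Phi"
  shows "\<exists>R C. R > 0 \<and> C > 0 \<and>
           (\<forall>p u. norm u = 1 \<longrightarrow>
              \<not> spectral_line A Phi (closest_pt o0 p u) u \<longrightarrow>
              norm (closest_pt o0 p u - o0) \<ge> R \<longrightarrow>
              onorm (Mgamma A Phi (closest_pt o0 p u) u) \<le> C)"
proof -
  obtain R where R: "R > 0" and lines: "\<And>x u. norm u = 1 \<Longrightarrow> (\<And>t. R \<le> norm (x + t *\<^sub>R u)) \<Longrightarrow>
      slowly_varying_line (line_higgs Phi x u) (line_connection A x u) (line_higgs_deriv Phi x u)"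
    using monopole_far_lines_slowly_varying[OF assms] by blast
  have "onorm (Mgamma A Phi (closest_pt o0 p u) u) \<le> 5"
    if u: "norm u = 1" and far_line: "R + norm o0 \<le> norm (closest_pt o0 p u - o0)" for p u
  proof -
    let ?x = "closest_pt o0 p u"
    have "R \<le> norm (?x + t *\<^sub>R u)" for t
      using norm_closest_pt_line_ge[OF u, of o0 p t] far_line by linarith
    then interpret slowly_varying_line "line_higgs Phi ?x u" "line_connection A ?x u" "line_higgs_deriv Phi ?x u"
      by (rule lines[OF u])
    show ?thesis
      using onorm_splitting_le by (simp add: Mgamma_def[abs_def] Lplus_eq_decay_space Lminus_eq_decay_space)
  qed
  moreover have "R + norm o0 > 0" using R by (simp add: add_pos_nonneg)
  ultimately show ?thesis by (intro exI[of _ "R + norm o0"] exI[of _ "5::real"]) auto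
qed

end
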